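(* Let $p, q$ be primes and $n, r \geq 1$ integers such that $p^n < qp^r$, $q$ divides $p^n - 1$, and $p^r$ divides $n$. Then exactly one of the following holds: (1) $p = 2$, $q = 3$, $n = 2$, $r = 1$; (2) $p = 2$, $q = 5$, $n = 4$, $r = 2$; (3) $p > 2$, $q = (p^p - 1)/(p-1)$, $n = p$, $r = 1$. *)

theory Defs
  imports "HOL-Computational_Algebra.Primes"
begin

end

theory Submission
  imports Defs
begin

text \<open>
  Write \<open>n = p * k\<close>, so that \<open>p ^ n - 1 = (p ^ k - 1) * S\<close> with
  \<open>S = \<Sum>i<p. (p ^ k) ^ i < 2 * p ^ (n - k)\<close>. Since \<open>2 * r \<le> p ^ r \<le> n\<close>, the bound
  \<open>q > p ^ (n - r)\<close> rules out \<open>q dvd p ^ k - 1\<close>, so \<open>q\<close> divides \<open>S\<close>, and then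
  \<open>p ^ n < q * p ^ r < 2 * p ^ (n - k + r)\<close> forces \<open>k \<le> r\<close>. Hence
  \<open>p ^ r \<le> n = p * k \<le> p * r\<close>, i.e. \<open>p ^ (r - 1) \<le> r\<close>, which leaves only \<open>r = 1\<close>
  or \<open>p = r = 2\<close>, and in both cases \<open>k = r\<close>. Finally \<open>q > p ^ (n - r)\<close> is more
  than half of \<open>S\<close>, so \<open>q = S\<close>.
\<close>

lemma power_diff_1_eq_nat: "(x::nat) ^ m - 1 = (x - 1) * (\<Sum>i<m. x ^ i)"
proof (cases "x = 0")
  case False
  then have "int (x ^ m - 1) = int ((x - 1) * (\<Sum>i<m. x ^ i))"
    by (simp add: of_nat_diff power_diff_1_eq[of "int x"] Suc_leI)
  then show ?thesis by (simp only: of_nat_eq_iff)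
qed (simp add: power_0_left)

lemma geometric_sum_less_double:
  fixes x m :: nat
  assumes "2 \<le> x" "1 \<le> m"
  shows "(\<Sum>i<m. x ^ i) < 2 * x ^ (m - 1)"
proof -
  have "(x - 1) * (\<Sum>i<m. x ^ i) = x ^ m - 1"
    by (rule power_diff_1_eq_nat[symmetric])
  also have "\<dots> < x ^ m"
    using assms by simp
  also have "\<dots> = x * x ^ (m - 1)"
    using assms by (simp flip: power_Suc)
  also have "\<dots> \<le> (x - 1) * (2 * x ^ (m - 1))"
    using assms by simp
  finally show ?thesis by simp
qed

lemma double_le_two_power: "2 * r \<le> (2::nat) ^ r" if "1 \<le> r"
  using that by (induction r rule: dec_induct) simp_all

lemma power_pred_le_self_cases:
  fixes p r :: nat
  assumes "2 \<le> p" "1 \<le> r" "p ^ (r - 1) \<le> r"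
  shows "r = 1 \<or> r = 2 \<and> p = 2"
proof (rule ccontr)
  assume "\<not> ?thesis"
  then consider "r = 2" "3 \<le> p" | "3 \<le> r" using assms by linarith
  then show False
  proof cases
    case 1 then show False using assms by simp
  next
    case 2
    have "2 * (r - 1) \<le> 2 ^ (r - 1)"
      using 2 by (intro double_le_two_power) simp
    also have "\<dots> \<le> p ^ (r - 1)"
      using assms by (simp add: power_mono)
    finally show False using 2 assms by linarith
  qed
qed

lemma two_le_power: "2 \<le> (p::nat) ^ k" if "2 \<le> p" "1 \<le> k"
  using that self_le_power[of p k] by simp

lemma prime_dvd_geometric_sum:
  fixes p q k r :: nat
  assumes "2 \<le> p" "1 \<le> k" "prime q"
    and "q dvd p ^ (p * k) - 1" "p ^ (p * k) < q * p ^ r" "2 * r \<le> p * k"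
  shows "q dvd (\<Sum>i<p. (p ^ k) ^ i)"
proof -
  have "p ^ (p * k) - 1 = (p ^ k - 1) * (\<Sum>i<p. (p ^ k) ^ i)"
    by (metis power_mult mult.commute power_diff_1_eq_nat)
  then have "q dvd p ^ k - 1 \<or> q dvd (\<Sum>i<p. (p ^ k) ^ i)"
    using assms(3,4) by (simp add: prime_dvd_mult_iff)
  moreover have "\<not> q dvd p ^ k - 1"
  proof
    assume "q dvd p ^ k - 1"
    moreover have "0 < p ^ k - 1"
      using two_le_power[OF assms(1,2)] by simp
    ultimately have "q \<le> p ^ k - 1"
      by (rule dvd_imp_le)
    then have "q < p ^ k"
      using \<open>0 < p ^ k - 1\<close> by linarith
    then have "q * p ^ r < p ^ k * p ^ r"
      using assms(1) by simp
    then have "p ^ (p * k) < p ^ (k + r)"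
      using assms(5) unfolding power_add by linarith
    then have "p * k < k + r"
      using assms(1) by simp
    moreover have "2 * k \<le> p * k"
      using assms(1) by simp
    ultimately show False
      using assms(6) by linarith
  qed
  ultimately show ?thesis by blast
qed

lemma exponent_le_of_dvd_geometric_sum:
  fixes p q k r :: nat
  assumes "2 \<le> p" "1 \<le> k"
    and "q dvd (\<Sum>i<p. (p ^ k) ^ i)" "p ^ (p * k) < q * p ^ r"
  shows "k \<le> r"
proof (rule ccontr)
  assume "\<not> k \<le> r"
  then have exponent: "k * (p - 1) + r \<le> p * k - 1"
    using assms(1) by (simp add: diff_mult_distrib2 mult.commute)
  have "0 < (\<Sum>i<p. (p ^ k) ^ i)"
    using assms(1) by (simp add: sum_pos2[where i=0])
  then have "q \<le> (\<Sum>i<p. (p ^ k) ^ i)"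
    using assms(3) by (simp add: dvd_imp_le)
  also have "\<dots> < 2 * (p ^ k) ^ (p - 1)"
    using assms(1) two_le_power[OF assms(1,2)] by (intro geometric_sum_less_double) simp_all
  finally have q_less: "q < 2 * (p ^ k) ^ (p - 1)" .
  have "p ^ (p * k) < q * p ^ r"
    by (fact assms(4))
  also have "\<dots> < 2 * (p ^ k) ^ (p - 1) * p ^ r"
    using assms(1) q_less by simp
  also have "\<dots> = 2 * p ^ (k * (p - 1) + r)"
    by (simp add: power_add power_mult)
  also have "\<dots> \<le> p * p ^ (p * k - 1)"
    using assms(1) exponent by (intro mult_mono power_increasing) simp_all
  also have "\<dots> = p ^ (p * k)"
    using assms(1,2) by (cases "p * k") simp_all
  finally show False by simp
qed

lemma dvd_geometric_sum_eq:
  fixes x m q :: nat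
  assumes "2 \<le> x" "1 \<le> m" "q dvd (\<Sum>i<m. x ^ i)" "x ^ (m - 1) < q"
  shows "q = (\<Sum>i<m. x ^ i)"
proof -
  obtain c where c: "(\<Sum>i<m. x ^ i) = q * c"
    using assms(3) by blast
  have "0 < (\<Sum>i<m. x ^ i)"
    using assms(2) by (simp add: sum_pos2[where i=0])
  with c have "c \<noteq> 0" by auto
  moreover have "c < 2"
  proof (rule ccontr)
    assume "\<not> c < 2"
    then have "2 * q \<le> (\<Sum>i<m. x ^ i)"
      using c by simp
    with geometric_sum_less_double[OF assms(1,2)] assms(4) show False by simp
  qed
  ultimately show ?thesis
    using c by simp
qed

lemma exponents_of_prime_dvd_power_diff_1:
  fixes p q n r :: nat
  assumes "prime p" "prime q" "1 \<le> n" "1 \<le> r"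
    and "p ^ n < q * p ^ r" "q dvd p ^ n - 1" "p ^ r dvd n"
  shows "n = p * r \<and> (r = 1 \<or> r = 2 \<and> p = 2) \<and> q dvd (\<Sum>i<p. (p ^ r) ^ i)"
proof -
  have p: "2 \<le> p"
    using assms(1) prime_ge_2_nat by blast
  have "p dvd p ^ r"
    using assms(4) by simp
  then have "p dvd n"
    using assms(7) by (rule dvd_trans)
  then obtain k where n: "n = p * k"
    by (rule dvdE)
  have "2 * r \<le> 2 ^ r"
    using assms(4) by (rule double_le_two_power)
  also have "\<dots> \<le> p ^ r"
    using p by (simp add: power_mono)
  also have "p ^ r \<le> n"
    using assms(3,7) by (simp add: dvd_imp_le)
  finally have r_le: "2 * r \<le> p * k"
    unfolding n .
  have k: "1 \<le> k"
    using assms(3) n by (cases k) simp_all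
  have q_dvd: "q dvd (\<Sum>i<p. (p ^ k) ^ i)"
    using prime_dvd_geometric_sum[OF p k assms(2)] assms(5,6) r_le n by simp
  have "k \<le> r"
    using exponent_le_of_dvd_geometric_sum[OF p k q_dvd] assms(5) n by simp
  have "p * p ^ (r - 1) = p ^ r"
    using assms(4) by (simp flip: power_Suc)
  also have "\<dots> \<le> p * k"
    using \<open>p ^ r \<le> n\<close> n by simp
  also have "\<dots> \<le> p * r"
    using \<open>k \<le> r\<close> by simp
  finally have r_cases: "r = 1 \<or> r = 2 \<and> p = 2"
    using power_pred_le_self_cases[OF p assms(4)] p by simp
  moreover have "k = r"
    using r_cases
  proof
    assume "r = 2 \<and> p = 2"
    then show ?thesis
      using \<open>p ^ r \<le> n\<close> n \<open>k \<le> r\<close> by simp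
  qed (use k \<open>k \<le> r\<close> in simp)
  ultimately show ?thesis
    using n q_dvd by simp
qed

theorem lemma6:
  fixes p q n r :: nat
  assumes "prime p" and "prime q" and "n \<ge> 1" and "r \<ge> 1"
    and "p ^ n < q * p ^ r"
    and "q dvd p ^ n - 1"
    and "p ^ r dvd n"
  shows "let C1 = (p = 2 \<and> q = 3 \<and> n = 2 \<and> r = 1);
             C2 = (p = 2 \<and> q = 5 \<and> n = 4 \<and> r = 2);
             C3 = (p > 2 \<and> q = (p ^ p - 1) div (p - 1) \<and> n = p \<and> r = 1)
         in (C1 \<and> \<not> C2 \<and> \<not> C3) \<or> (\<not> C1 \<and> C2 \<and> \<not> C3) \<or> (\<not> C1 \<and> \<not> C2 \<and> C3)"
proof -
  have p: "2 \<le> p"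
    using assms(1) prime_ge_2_nat by blast
  obtain n_eq: "n = p * r" and r_cases: "r = 1 \<or> r = 2 \<and> p = 2"
    and q_dvd: "q dvd (\<Sum>i<p. (p ^ r) ^ i)"
    using exponents_of_prime_dvd_power_diff_1[OF assms] by blast
  have "(p ^ r) ^ (p - 1) * p ^ r = (p ^ r) ^ p"
    using p by (cases p) (simp_all add: mult.commute)
  also have "\<dots> = p ^ n"
    using n_eq by (simp add: power_mult mult.commute[of p r])
  also have "\<dots> < q * p ^ r"
    by (fact assms(5))
  finally have "(p ^ r) ^ (p - 1) < q"
    by simp
  then have q: "q = (\<Sum>i<p. (p ^ r) ^ i)"
    using dvd_geometric_sum_eq[OF two_le_power[OF p assms(4)]] p q_dvd by simp
  from r_cases show ?thesis
  proof
    assume "r = 1"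
    moreover have "(p ^ p - 1) div (p - 1) = (\<Sum>i<p. p ^ i)"
      unfolding power_diff_1_eq_nat using p by simp
    ultimately show ?thesis
      using n_eq q p by (cases "p = 2") (simp_all add: Let_def eval_nat_numeral)
  next
    assume "r = 2 \<and> p = 2"
    then show ?thesis
      using n_eq q by (simp add: Let_def eval_nat_numeral)
  qed
qed

end
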